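(* Let $R$ be a ring, $I$ a non-empty countable set, $D=\{\delta_i\mid i\in I\}$ a family of derivations of $R$, $X=\{x_i\mid i\in I\}$ a set of distinct non-commuting indeterminates, and $S=R[X;D]$. If $S$ is left quasi-duo or right quasi-duo, then $|I|=1$.
   Context: All rings are unital and associative. A derivation of $R$ is an additive map $\delta:R\to R$ with $\delta(rs)=r\delta(s)+\delta(r)s$. The differential polynomial ring in several indeterminates $R[X;D]$ is the set of all (noncommutative) polynomials in the indeterminates $x_i\in X$ (finite $R$-linear combinations of monomials, i.e. finite words in the alphabet $X$, with coefficients on the left), with natural addition and multiplication generated by $x_ia=ax_i+\delta_i(a)$ for $a\in R$, $i\in I$ (the $\delta_i$ need not be distinct). A ring is left (right) quasi-duo if every maximal left (right) ideal is two-sided. *)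

theory Defs
  imports Main "HOL-Library.Countable_Set"
begin

definition derivation :: "('a::ring_1 \<Rightarrow> 'a) \<Rightarrow> bool" where
  "derivation d \<longleftrightarrow> (\<forall>r s. d (r + s) = d r + d s) \<and> (\<forall>r s. d (r * s) = r * d s + d r * s)"

definition unital_ring_hom :: "('a::ring_1 \<Rightarrow> 'b::ring_1) \<Rightarrow> bool" where
  "unital_ring_hom f \<longleftrightarrow> (\<forall>r s. f (r + s) = f r + f s) \<and> (\<forall>r s. f (r * s) = f r * f s) \<and> f 1 = 1"

definition monomial_word :: "('i \<Rightarrow> 'b::ring_1) \<Rightarrow> 'i list \<Rightarrow> 'b" where
  "monomial_word x w = foldr (\<lambda>i m. x i * m) w 1"

definition fin_coeffs :: "'i set \<Rightarrow> ('i list \<Rightarrow> 'a::zero) \<Rightarrow> bool" where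
  "fin_coeffs I c \<longleftrightarrow> finite {w. c w \<noteq> 0} \<and> (\<forall>w. c w \<noteq> 0 \<longrightarrow> set w \<subseteq> I)"

definition lin_comb :: "('a::ring_1 \<Rightarrow> 'b::ring_1) \<Rightarrow> ('i \<Rightarrow> 'b) \<Rightarrow> ('i list \<Rightarrow> 'a) \<Rightarrow> 'b" where
  "lin_comb emb x c = (\<Sum>w\<in>{w. c w \<noteq> 0}. emb (c w) * monomial_word x w)"

text \<open>S (a ring type 'b), together with emb : R \<rightarrow> S and the indeterminates x_i (i \<in> I),
  is the differential polynomial ring R[X;D] with D = (\<delta>_i)_{i\<in>I}: every element of S is uniquely
  a finite left R-linear combination of words in the x_i, and x_i a = a x_i + \<delta>_i(a).\<close>
definition is_diff_poly_ring ::
  "'i set \<Rightarrow> ('i \<Rightarrow> 'a::ring_1 \<Rightarrow> 'a) \<Rightarrow> ('a \<Rightarrow> 'b::ring_1) \<Rightarrow> ('i \<Rightarrow> 'b) \<Rightarrow> bool" where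
  "is_diff_poly_ring I \<delta> emb x \<longleftrightarrow>
     unital_ring_hom emb \<and>
     (\<forall>i\<in>I. \<forall>a. x i * emb a = emb a * x i + emb (\<delta> i a)) \<and>
     (\<forall>s. \<exists>!c. fin_coeffs I c \<and> s = lin_comb emb x c)"

definition left_ideal :: "'b::ring_1 set \<Rightarrow> bool" where
  "left_ideal L \<longleftrightarrow> 0 \<in> L \<and> (\<forall>a\<in>L. \<forall>b\<in>L. a + b \<in> L) \<and> (\<forall>a\<in>L. - a \<in> L)
     \<and> (\<forall>r. \<forall>a\<in>L. r * a \<in> L)"

definition right_ideal :: "'b::ring_1 set \<Rightarrow> bool" where
  "right_ideal L \<longleftrightarrow> 0 \<in> L \<and> (\<forall>a\<in>L. \<forall>b\<in>L. a + b \<in> L) \<and> (\<forall>a\<in>L. - a \<in> L)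
     \<and> (\<forall>r. \<forall>a\<in>L. a * r \<in> L)"

definition two_sided_ideal :: "'b::ring_1 set \<Rightarrow> bool" where
  "two_sided_ideal L \<longleftrightarrow> left_ideal L \<and> right_ideal L"

definition maximal_left_ideal :: "'b::ring_1 set \<Rightarrow> bool" where
  "maximal_left_ideal L \<longleftrightarrow> left_ideal L \<and> L \<noteq> UNIV \<and>
     (\<forall>J. left_ideal J \<and> L \<subseteq> J \<longrightarrow> J = L \<or> J = UNIV)"

definition maximal_right_ideal :: "'b::ring_1 set \<Rightarrow> bool" where
  "maximal_right_ideal L \<longleftrightarrow> right_ideal L \<and> L \<noteq> UNIV \<and>
     (\<forall>J. right_ideal J \<and> L \<subseteq> J \<longrightarrow> J = L \<or> J = UNIV)"

definition left_quasi_duo :: "'b::ring_1 itself \<Rightarrow> bool" where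
  "left_quasi_duo _ \<longleftrightarrow> (\<forall>L::'b set. maximal_left_ideal L \<longrightarrow> two_sided_ideal L)"

definition right_quasi_duo :: "'b::ring_1 itself \<Rightarrow> bool" where
  "right_quasi_duo _ \<longleftrightarrow> (\<forall>L::'b set. maximal_right_ideal L \<longrightarrow> two_sided_ideal L)"

end

theory Submission
  imports Defs
begin

text \<open>Let \<open>i \<noteq> j\<close> be two indices. In a left quasi-duo ring every proper left ideal lies in a
  maximal left ideal \<open>M\<close> that is two-sided; for \<open>K = S x\<^sub>i + S (x\<^sub>i x\<^sub>j - 1)\<close> this gives
  \<open>x\<^sub>i x\<^sub>j \<in> M\<close> and \<open>x\<^sub>i x\<^sub>j - 1 \<in> M\<close>, hence \<open>1 \<in> M\<close>. So it suffices that \<open>K\<close> is proper,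
  and symmetrically that \<open>x\<^sub>i S + (x\<^sub>j x\<^sub>i - 1) S\<close> is a proper right ideal.
  Properness is witnessed by additive functionals \<open>S \<rightarrow> R\<close> that weight the coefficient of each
  word. Right multiplication by a variable merely appends a letter to every word, so for the left
  ideal one may take the sum of the coefficients of the words \<open>(i j)\<^sup>n\<close>. Left multiplication by
  \<open>x\<^sub>k\<close> also produces the terms \<open>\<delta>\<^sub>k(a)\<close>; the weights for the right ideal are computed by a
  small automaton reading the word from the left, corrected by the derivations so that left
  multiplication by \<open>x\<^sub>k\<close> becomes a state transition. Countability of the index set is not needed.\<close>

lemma ex_maximal_superset_avoiding:
  assumes "P J" and "a \<notin> J"
    and chain_closed: "\<And>C. C \<noteq> {} \<Longrightarrow> subset.chain {L. P L} C \<Longrightarrow> P (\<Union>C)"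
  shows "\<exists>M. P M \<and> J \<subseteq> M \<and> a \<notin> M \<and> (\<forall>L. P L \<and> M \<subseteq> L \<and> a \<notin> L \<longrightarrow> L = M)"
proof -
  let ?A = "{L. P L \<and> J \<subseteq> L \<and> a \<notin> L}"
  have "\<Union>C \<in> ?A" if "C \<noteq> {}" and "subset.chain ?A C" for C
  proof -
    have "subset.chain {L. P L} C"
      using that(2) by (auto simp: subset.chain_def)
    then show ?thesis
      using that chain_closed by (auto simp: subset.chain_def)
  qed
  then obtain M where "M \<in> ?A" and "\<forall>L\<in>?A. M \<subseteq> L \<longrightarrow> L = M"
    using subset_Zorn_nonempty[of ?A] assms(1,2) by blast
  then show ?thesis by blast
qed

lemma chain_Union_closed:
  assumes "subset.chain A C" and "\<forall>L\<in>C. \<forall>a\<in>L. \<forall>b\<in>L. f a b \<in> L"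
    and "a \<in> \<Union>C" and "b \<in> \<Union>C"
  shows "f a b \<in> \<Union>C"
proof -
  obtain L L' where "L \<in> C" "a \<in> L" "L' \<in> C" "b \<in> L'"
    using assms(3,4) by blast
  moreover have "L \<subseteq> L' \<or> L' \<subseteq> L"
    using assms(1) \<open>L \<in> C\<close> \<open>L' \<in> C\<close> by (auto simp: subset.chain_def)
  ultimately show ?thesis
    using assms(2) by blast
qed

lemma left_idealD:
  assumes "left_ideal L"
  shows "0 \<in> L" and "a \<in> L \<Longrightarrow> b \<in> L \<Longrightarrow> a + b \<in> L" and "a \<in> L \<Longrightarrow> - a \<in> L"
    and "a \<in> L \<Longrightarrow> r * a \<in> L"
  using assms unfolding left_ideal_def by simp_all

lemma right_idealD:
  assumes "right_ideal L"
  shows "0 \<in> L" and "a \<in> L \<Longrightarrow> b \<in> L \<Longrightarrow> a + b \<in> L" and "a \<in> L \<Longrightarrow> - a \<in> L"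
    and "a \<in> L \<Longrightarrow> a * r \<in> L"
  using assms unfolding right_ideal_def by simp_all

lemma left_ideal_Union_chain:
  assumes "C \<noteq> {}" and chain: "subset.chain {L. left_ideal L} C"
  shows "left_ideal (\<Union>C)"
proof -
  have ideals: "left_ideal L" if "L \<in> C" for L
    using chain that by (auto simp: subset.chain_def)
  have "\<forall>a\<in>\<Union>C. \<forall>b\<in>\<Union>C. a + b \<in> \<Union>C"
    using chain_Union_closed[OF chain] left_idealD(2)[OF ideals] by metis
  moreover have "0 \<in> \<Union>C"
    using assms(1) left_idealD(1)[OF ideals] by blast
  moreover have "\<forall>a\<in>\<Union>C. - a \<in> \<Union>C" and "\<forall>r. \<forall>a\<in>\<Union>C. r * a \<in> \<Union>C"
    using left_idealD(3,4)[OF ideals] by blast+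
  ultimately show ?thesis
    unfolding left_ideal_def by blast
qed

lemma right_ideal_Union_chain:
  assumes "C \<noteq> {}" and chain: "subset.chain {L. right_ideal L} C"
  shows "right_ideal (\<Union>C)"
proof -
  have ideals: "right_ideal L" if "L \<in> C" for L
    using chain that by (auto simp: subset.chain_def)
  have "\<forall>a\<in>\<Union>C. \<forall>b\<in>\<Union>C. a + b \<in> \<Union>C"
    using chain_Union_closed[OF chain] right_idealD(2)[OF ideals] by metis
  moreover have "0 \<in> \<Union>C"
    using assms(1) right_idealD(1)[OF ideals] by blast
  moreover have "\<forall>a\<in>\<Union>C. - a \<in> \<Union>C" and "\<forall>r. \<forall>a\<in>\<Union>C. a * r \<in> \<Union>C"
    using right_idealD(3,4)[OF ideals] by blast+
  ultimately show ?thesis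
    unfolding right_ideal_def by blast
qed

lemma left_ideal_one_iff:
  assumes "left_ideal L"
  shows "1 \<in> L \<longleftrightarrow> L = UNIV"
proof
  assume "1 \<in> L"
  then have "r * 1 \<in> L" for r
    by (rule left_idealD(4)[OF assms])
  then show "L = UNIV" by auto
qed auto

lemma right_ideal_one_iff:
  assumes "right_ideal L"
  shows "1 \<in> L \<longleftrightarrow> L = UNIV"
proof
  assume "1 \<in> L"
  then have "1 * r \<in> L" for r
    by (rule right_idealD(4)[OF assms])
  then show "L = UNIV" by auto
qed auto

lemma ex_maximal_left_ideal:
  assumes "left_ideal J" and "1 \<notin> J"
  shows "\<exists>M. maximal_left_ideal M \<and> J \<subseteq> M"
proof -
  obtain M where M: "left_ideal M" "J \<subseteq> M" "1 \<notin> M"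
    and maximal: "\<forall>L. left_ideal L \<and> M \<subseteq> L \<and> 1 \<notin> L \<longrightarrow> L = M"
    using ex_maximal_superset_avoiding[of left_ideal, OF assms left_ideal_Union_chain] by blast
  have "maximal_left_ideal M"
    unfolding maximal_left_ideal_def
  proof (intro conjI allI impI)
    show "M \<noteq> UNIV" using M(3) by blast
    fix L assume "left_ideal L \<and> M \<subseteq> L"
    then show "L = M \<or> L = UNIV"
      using maximal left_ideal_one_iff by blast
  qed (fact M(1))
  with M(2) show ?thesis by blast
qed

lemma ex_maximal_right_ideal:
  assumes "right_ideal J" and "1 \<notin> J"
  shows "\<exists>M. maximal_right_ideal M \<and> J \<subseteq> M"
proof -
  obtain M where M: "right_ideal M" "J \<subseteq> M" "1 \<notin> M"
    and maximal: "\<forall>L. right_ideal L \<and> M \<subseteq> L \<and> 1 \<notin> L \<longrightarrow> L = M"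
    using ex_maximal_superset_avoiding[of right_ideal, OF assms right_ideal_Union_chain] by blast
  have "maximal_right_ideal M"
    unfolding maximal_right_ideal_def
  proof (intro conjI allI impI)
    show "M \<noteq> UNIV" using M(3) by blast
    fix L assume "right_ideal L \<and> M \<subseteq> L"
    then show "L = M \<or> L = UNIV"
      using maximal right_ideal_one_iff by blast
  qed (fact M(1))
  with M(2) show ?thesis by blast
qed

lemma left_ideal_generated: "left_ideal {s * a + t * c | s t. True}" (is "left_ideal ?K")
proof -
  have mem: "s * a + t * c \<in> ?K" for s t by blast
  show ?thesis
    unfolding left_ideal_def
  proof (intro conjI ballI allI)
    show "0 \<in> ?K"
      using mem[of 0 0] by simp
  next
    fix u v assume "u \<in> ?K" "v \<in> ?K"
    then obtain s t s' t' where "u = s * a + t * c" "v = s' * a + t' * c" by blast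
    then have "u + v = (s + s') * a + (t + t') * c" by (simp add: algebra_simps)
    then show "u + v \<in> ?K" using mem by presburger
  next
    fix u assume "u \<in> ?K"
    then obtain s t where "u = s * a + t * c" by blast
    then have "- u = (- s) * a + (- t) * c" by simp
    then show "- u \<in> ?K" using mem by presburger
  next
    fix r u assume "u \<in> ?K"
    then obtain s t where "u = s * a + t * c" by blast
    then have "r * u = (r * s) * a + (r * t) * c" by (simp add: algebra_simps)
    then show "r * u \<in> ?K" using mem by presburger
  qed
qed

lemma right_ideal_generated: "right_ideal {a * s + c * t | s t. True}" (is "right_ideal ?K")
proof -
  have mem: "a * s + c * t \<in> ?K" for s t by blast
  show ?thesis
    unfolding right_ideal_def
  proof (intro conjI ballI allI)
    show "0 \<in> ?K"
      using mem[of 0 0] by simp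
  next
    fix u v assume "u \<in> ?K" "v \<in> ?K"
    then obtain s t s' t' where "u = a * s + c * t" "v = a * s' + c * t'" by blast
    then have "u + v = a * (s + s') + c * (t + t')" by (simp add: algebra_simps)
    then show "u + v \<in> ?K" using mem by presburger
  next
    fix u assume "u \<in> ?K"
    then obtain s t where "u = a * s + c * t" by blast
    then have "- u = a * (- s) + c * (- t)" by simp
    then show "- u \<in> ?K" using mem by presburger
  next
    fix r u assume "u \<in> ?K"
    then obtain s t where "u = a * s + c * t" by blast
    then have "u * r = a * (s * r) + c * (t * r)" by (simp add: algebra_simps)
    then show "u * r \<in> ?K" using mem by presburger
  qed
qed

lemma left_quasi_duo_unit_combination:
  fixes a b :: "'b::ring_1"
  assumes "left_quasi_duo TYPE('b)"
  shows "\<exists>s t. s * a + t * (a * b - 1) = 1"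
proof (rule ccontr)
  let ?K = "{s * a + t * (a * b - 1) | s t. True}"
  assume "\<nexists>s t. s * a + t * (a * b - 1) = 1"
  then have "1 \<notin> ?K" by auto
  then obtain M where M: "maximal_left_ideal M" "?K \<subseteq> M"
    using ex_maximal_left_ideal left_ideal_generated by blast
  then have ideal: "left_ideal M" "right_ideal M"
    using assms unfolding left_quasi_duo_def two_sided_ideal_def by blast+
  have "1 * a + 0 * (a * b - 1) \<in> ?K" "0 * a + 1 * (a * b - 1) \<in> ?K" by blast+
  then have "a \<in> M" and "a * b - 1 \<in> M"
    using M(2) by auto
  have "a * b \<in> M"
    using \<open>a \<in> M\<close> by (rule right_idealD(4)[OF ideal(2)])
  moreover have "- (a * b - 1) \<in> M"
    using \<open>a * b - 1 \<in> M\<close> by (rule left_idealD(3)[OF ideal(1)])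
  ultimately have "a * b + - (a * b - 1) \<in> M"
    by (rule left_idealD(2)[OF ideal(1)])
  then have "M = UNIV"
    using left_ideal_one_iff[OF ideal(1)] by simp
  then show False
    using M(1) unfolding maximal_left_ideal_def by blast
qed

lemma right_quasi_duo_unit_combination:
  fixes a b :: "'b::ring_1"
  assumes "right_quasi_duo TYPE('b)"
  shows "\<exists>s t. b * s + (a * b - 1) * t = 1"
proof (rule ccontr)
  let ?K = "{b * s + (a * b - 1) * t | s t. True}"
  assume "\<nexists>s t. b * s + (a * b - 1) * t = 1"
  then have "1 \<notin> ?K" by auto
  then obtain M where M: "maximal_right_ideal M" "?K \<subseteq> M"
    using ex_maximal_right_ideal right_ideal_generated by blast
  then have ideal: "left_ideal M" "right_ideal M"
    using assms unfolding right_quasi_duo_def two_sided_ideal_def by blast+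
  have "b * 1 + (a * b - 1) * 0 \<in> ?K" "b * 0 + (a * b - 1) * 1 \<in> ?K" by blast+
  then have "b \<in> M" and "a * b - 1 \<in> M"
    using M(2) by auto
  have "a * b \<in> M"
    using \<open>b \<in> M\<close> by (rule left_idealD(4)[OF ideal(1)])
  moreover have "- (a * b - 1) \<in> M"
    using \<open>a * b - 1 \<in> M\<close> by (rule right_idealD(3)[OF ideal(2)])
  ultimately have "a * b + - (a * b - 1) \<in> M"
    by (rule right_idealD(2)[OF ideal(2)])
  then have "M = UNIV"
    using right_ideal_one_iff[OF ideal(2)] by simp
  then show False
    using M(1) unfolding maximal_right_ideal_def by blast
qed

lemma monomial_word_Nil [simp]: "monomial_word x [] = 1"
  by (simp add: monomial_word_def)

lemma monomial_word_Cons [simp]: "monomial_word x (k # w) = x k * monomial_word x w"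
  by (simp add: monomial_word_def)

lemma monomial_word_append: "monomial_word x (w @ v) = monomial_word x w * monomial_word x v"
  by (induct w) (simp_all add: mult.assoc)

lemma concat_replicate_Suc: "concat (replicate (Suc n) xs) = concat (replicate n xs) @ xs"
  by (induct n) auto

definition alternating_words :: "'i \<Rightarrow> 'i \<Rightarrow> 'i list set" where
  "alternating_words i j = range (\<lambda>n. concat (replicate n [i, j]))"

lemma Nil_in_alternating_words: "[] \<in> alternating_words i j"
  unfolding alternating_words_def by (simp add: image_iff exI[of _ 0])

lemma snoc_notin_alternating_words:
  assumes "i \<noteq> j"
  shows "w @ [i] \<notin> alternating_words i j"
proof
  assume "w @ [i] \<in> alternating_words i j"
  then obtain n where "w @ [i] = concat (replicate n [i, j])"
    unfolding alternating_words_def by blast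
  then show False
    using assms by (cases n) (simp, simp only: concat_replicate_Suc, auto)
qed

lemma append_pair_in_alternating_words:
  "w @ [i, j] \<in> alternating_words i j \<longleftrightarrow> w \<in> alternating_words i j"
proof
  assume "w @ [i, j] \<in> alternating_words i j"
  then obtain n where n: "w @ [i, j] = concat (replicate n [i, j])"
    unfolding alternating_words_def by blast
  then obtain m where "n = Suc m"
    by (cases n) auto
  with n have "w = concat (replicate m [i, j])"
    by (simp only: concat_replicate_Suc) simp
  then show "w \<in> alternating_words i j"
    unfolding alternating_words_def by blast
next
  assume "w \<in> alternating_words i j"
  then obtain n where "w = concat (replicate n [i, j])"
    unfolding alternating_words_def by blast
  then have "w @ [i, j] = concat (replicate (Suc n) [i, j])"
    by (simp only: concat_replicate_Suc)
  then show "w @ [i, j] \<in> alternating_words i j"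
    unfolding alternating_words_def by blast
qed

locale diff_poly_ring =
  fixes I :: "'i set" and \<delta> :: "'i \<Rightarrow> 'a::ring_1 \<Rightarrow> 'a"
    and emb :: "'a \<Rightarrow> 'b::ring_1" and x :: "'i \<Rightarrow> 'b"
  assumes derivations: "\<forall>i\<in>I. derivation (\<delta> i)"
    and diff_poly_ring: "is_diff_poly_ring I \<delta> emb x"
begin

lemma emb_add: "emb (a + b) = emb a + emb b"
  and emb_one [simp]: "emb 1 = 1"
  using diff_poly_ring unfolding is_diff_poly_ring_def unital_ring_hom_def by blast+

lemma emb_zero [simp]: "emb 0 = 0"
  using emb_add[of 0 0] by simp

lemma var_mult_emb: "i \<in> I \<Longrightarrow> x i * emb a = emb a * x i + emb (\<delta> i a)"
  using diff_poly_ring unfolding is_diff_poly_ring_def by blast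

lemma derivation_add: "i \<in> I \<Longrightarrow> \<delta> i (a + b) = \<delta> i a + \<delta> i b"
  using derivations unfolding derivation_def by blast

lemma unique_coeffs: "\<exists>!c. fin_coeffs I c \<and> s = lin_comb emb x c"
  using diff_poly_ring unfolding is_diff_poly_ring_def by blast

definition coeff :: "'b \<Rightarrow> 'i list \<Rightarrow> 'a" where
  "coeff s = (THE c. fin_coeffs I c \<and> s = lin_comb emb x c)"

lemma fin_coeffs_coeff: "fin_coeffs I (coeff s)"
  and lin_comb_coeff: "lin_comb emb x (coeff s) = s"
  using theI'[OF unique_coeffs[of s]] unfolding coeff_def by auto

lemma coeff_unique: "fin_coeffs I c \<Longrightarrow> lin_comb emb x c = s \<Longrightarrow> coeff s = c"
  unfolding coeff_def by (rule the1_equality[OF unique_coeffs]) auto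

abbreviation support :: "'b \<Rightarrow> 'i list set" where
  "support s \<equiv> {w. coeff s w \<noteq> 0}"

lemma finite_support: "finite (support s)"
  and set_support: "w \<in> support s \<Longrightarrow> set w \<subseteq> I"
  using fin_coeffs_coeff[of s] unfolding fin_coeffs_def by auto

lemma coeff_expansion: "s = (\<Sum>w\<in>support s. emb (coeff s w) * monomial_word x w)"
  using lin_comb_coeff[of s] unfolding lin_comb_def by simp

lemma coeff_expansion_superset:
  assumes "finite F" and "support s \<subseteq> F"
  shows "s = (\<Sum>w\<in>F. emb (coeff s w) * monomial_word x w)"
  by (subst coeff_expansion, rule sum.mono_neutral_left) (use assms in auto)

definition coeff_sum :: "('i list \<Rightarrow> 'a \<Rightarrow> 'a) \<Rightarrow> 'b \<Rightarrow> 'a" where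
  "coeff_sum g s = (\<Sum>w\<in>support s. g w (coeff s w))"

definition additive_weights :: "('i list \<Rightarrow> 'a \<Rightarrow> 'a) \<Rightarrow> bool" where
  "additive_weights g \<longleftrightarrow> (\<forall>w a b. set w \<subseteq> I \<longrightarrow> g w (a + b) = g w a + g w b)"

lemma additive_weightsD: "additive_weights g \<Longrightarrow> set w \<subseteq> I \<Longrightarrow> g w (a + b) = g w a + g w b"
  unfolding additive_weights_def by blast

lemma additive_weights_zero: "additive_weights g \<Longrightarrow> set w \<subseteq> I \<Longrightarrow> g w 0 = 0"
  using additive_weightsD[of g w 0 0] by simp

lemma additive_weights_append:
  "additive_weights g \<Longrightarrow> k \<in> I \<Longrightarrow> additive_weights (\<lambda>w. g (w @ [k]))"
  unfolding additive_weights_def by simp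

lemma coeff_sum_sum:
  assumes "finite F" and "inj_on h F" and words: "\<And>w. w \<in> F \<Longrightarrow> set (h w) \<subseteq> I"
    and g: "additive_weights g"
  shows "coeff_sum g (\<Sum>w\<in>F. emb (c w) * monomial_word x (h w)) = (\<Sum>w\<in>F. g (h w) (c w))"
proof -
  define c' where "c' v = (if v \<in> h ` F then c (the_inv_into F h v) else 0)" for v
  have c'_h: "c' (h w) = c w" if "w \<in> F" for w
    using that assms(2) by (simp add: c'_def the_inv_into_f_f)
  have support_c': "{v. c' v \<noteq> 0} \<subseteq> h ` F"
    by (auto simp: c'_def split: if_splits)
  have "(\<Sum>w\<in>F. emb (c w) * monomial_word x (h w)) = (\<Sum>v\<in>h ` F. emb (c' v) * monomial_word x v)"
    using assms(2) by (simp add: sum.reindex c'_h)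
  also have "\<dots> = lin_comb emb x c'"
    unfolding lin_comb_def
    by (rule sum.mono_neutral_right) (use assms(1) support_c' in auto)
  finally have coeff_eq: "coeff (\<Sum>w\<in>F. emb (c w) * monomial_word x (h w)) = c'"
    using support_c' assms(1) words
    by (intro coeff_unique) (auto simp: fin_coeffs_def intro: finite_subset)
  have "coeff_sum g (\<Sum>w\<in>F. emb (c w) * monomial_word x (h w)) = (\<Sum>v\<in>h ` F. g v (c' v))"
    unfolding coeff_sum_def coeff_eq
    by (rule sum.mono_neutral_left)
       (use assms(1) support_c' words additive_weights_zero[OF g] in auto)
  also have "\<dots> = (\<Sum>w\<in>F. g (h w) (c w))"
    using assms(2) by (simp add: sum.reindex c'_h)
  finally show ?thesis .
qed

lemma coeff_sum_sum_monomials: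
  assumes "finite F" and "\<And>w. w \<in> F \<Longrightarrow> set w \<subseteq> I" and "additive_weights g"
  shows "coeff_sum g (\<Sum>w\<in>F. emb (c w) * monomial_word x w) = (\<Sum>w\<in>F. g w (c w))"
  using coeff_sum_sum[of F "\<lambda>w. w" g c] assms by simp

lemma coeff_sum_superset:
  assumes "finite F" and "support s \<subseteq> F" and "\<And>w. w \<in> F \<Longrightarrow> set w \<subseteq> I"
    and "additive_weights g"
  shows "coeff_sum g s = (\<Sum>w\<in>F. g w (coeff s w))"
  unfolding coeff_sum_def
  by (rule sum.mono_neutral_left) (use assms additive_weights_zero in auto)

lemma coeff_sum_add:
  assumes g: "additive_weights g"
  shows "coeff_sum g (s + t) = coeff_sum g s + coeff_sum g t"
proof -
  let ?F = "support s \<union> support t"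
  have F: "finite ?F" "\<And>w. w \<in> ?F \<Longrightarrow> set w \<subseteq> I"
    using finite_support set_support by auto
  have "s + t = (\<Sum>w\<in>?F. emb (coeff s w + coeff t w) * monomial_word x w)"
    using coeff_expansion_superset[OF F(1), of s] coeff_expansion_superset[OF F(1), of t]
    by (simp add: emb_add distrib_right sum.distrib)
  then have "coeff_sum g (s + t) = (\<Sum>w\<in>?F. g w (coeff s w + coeff t w))"
    using coeff_sum_sum_monomials[OF F g] by simp
  also have "\<dots> = (\<Sum>w\<in>?F. g w (coeff s w)) + (\<Sum>w\<in>?F. g w (coeff t w))"
    using F(2) by (simp add: additive_weightsD[OF g] sum.distrib)
  also have "\<dots> = coeff_sum g s + coeff_sum g t"
    using coeff_sum_superset[OF F(1) _ F(2) g] by simp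
  finally show ?thesis .
qed

lemma coeff_sum_diff:
  "additive_weights g \<Longrightarrow> coeff_sum g (s - t) = coeff_sum g s - coeff_sum g t"
  using coeff_sum_add[of g "s - t" t] by (simp add: eq_diff_eq)

lemma coeff_sum_one: "additive_weights g \<Longrightarrow> coeff_sum g 1 = g [] 1"
  using coeff_sum_sum_monomials[of "{[]}" g "\<lambda>_. 1"] by simp

lemma coeff_sum_mult_var:
  assumes "k \<in> I" and "additive_weights g"
  shows "coeff_sum g (s * x k) = coeff_sum (\<lambda>w. g (w @ [k])) s"
proof -
  have "s * x k = (\<Sum>w\<in>support s. emb (coeff s w) * monomial_word x w) * x k"
    by (subst (1) coeff_expansion[of s]) (rule refl)
  also have "\<dots> = (\<Sum>w\<in>support s. emb (coeff s w) * monomial_word x (w @ [k]))"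
    by (simp add: sum_distrib_right monomial_word_append mult.assoc)
  also have "coeff_sum g \<dots> = (\<Sum>w\<in>support s. g (w @ [k]) (coeff s w))"
    using assms set_support by (intro coeff_sum_sum finite_support) (auto simp: inj_on_def)
  finally show ?thesis
    unfolding coeff_sum_def .
qed

lemma coeff_sum_var_mult:
  assumes k: "k \<in> I" and g: "additive_weights g"
  shows "coeff_sum g (x k * s) =
    (\<Sum>w\<in>support s. g (k # w) (coeff s w) + g w (\<delta> k (coeff s w)))"
proof -
  have "x k * s = x k * (\<Sum>w\<in>support s. emb (coeff s w) * monomial_word x w)"
    by (subst (1) coeff_expansion[of s]) (rule refl)
  also have "\<dots> = (\<Sum>w\<in>support s. emb (coeff s w) * monomial_word x (k # w))
      + (\<Sum>w\<in>support s. emb (\<delta> k (coeff s w)) * monomial_word x w)"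
    by (simp add: sum_distrib_left var_mult_emb[OF k] distrib_right mult.assoc sum.distrib
        flip: mult.assoc[of "x k"])
  finally have expand: "x k * s = \<dots>" .
  have "coeff_sum g (\<Sum>w\<in>support s. emb (coeff s w) * monomial_word x (k # w))
      = (\<Sum>w\<in>support s. g (k # w) (coeff s w))"
    using k g set_support by (intro coeff_sum_sum finite_support) auto
  moreover have "coeff_sum g (\<Sum>w\<in>support s. emb (\<delta> k (coeff s w)) * monomial_word x w)
      = (\<Sum>w\<in>support s. g w (\<delta> k (coeff s w)))"
    using coeff_sum_sum_monomials[OF finite_support set_support g] .
  ultimately show ?thesis
    unfolding expand by (simp add: coeff_sum_add[OF g] sum.distrib)
qed

lemma left_combination_ne_one:
  assumes "i \<in> I" and "j \<in> I" and "i \<noteq> j"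
  shows "s * x i + t * (x i * x j - 1) \<noteq> 1"
proof
  define g :: "'i list \<Rightarrow> 'a \<Rightarrow> 'a"
    where "g w a = (if w \<in> alternating_words i j then a else 0)" for w a
  have g: "additive_weights g"
    by (simp add: additive_weights_def g_def)
  have "(\<lambda>w. g (w @ [i])) = (\<lambda>_ _. 0)"
    using snoc_notin_alternating_words[OF assms(3)] by (simp add: g_def fun_eq_iff)
  then have right_i: "coeff_sum g (s * x i) = 0"
    unfolding coeff_sum_mult_var[OF assms(1) g] by (simp add: coeff_sum_def)
  have "coeff_sum g (t * x i * x j) = coeff_sum (\<lambda>w. g ((w @ [i]) @ [j])) t"
    using coeff_sum_mult_var[OF assms(2) g]
      coeff_sum_mult_var[OF assms(1) additive_weights_append[OF g assms(2)]]
    by simp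
  also have "(\<lambda>w. g ((w @ [i]) @ [j])) = g"
    by (simp add: g_def fun_eq_iff append_pair_in_alternating_words)
  finally have right_ij: "coeff_sum g (t * x i * x j) = coeff_sum g t" .
  assume "s * x i + t * (x i * x j - 1) = 1"
  then have "s * x i + t * x i * x j - t = 1"
    by (simp add: algebra_simps)
  moreover have "coeff_sum g (s * x i + t * x i * x j - t) = 0"
    by (simp add: coeff_sum_add coeff_sum_diff g right_i right_ij)
  ultimately have "coeff_sum g 1 = 0"
    by simp
  moreover have "coeff_sum g 1 = 1"
    by (simp add: coeff_sum_one g g_def Nil_in_alternating_words)
  ultimately show False by simp
qed

text \<open>The subtracted term cancels the \<open>\<delta>\<^sub>k\<close>-part of \<open>x\<^sub>k a = a x\<^sub>k + \<delta>\<^sub>k(a)\<close>, which makes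
  left multiplication by \<open>x\<^sub>k\<close> act on the weights as the transition \<open>\<tau> k\<close>
  (lemma \<open>coeff_sum_weight_var_mult\<close>).\<close>

fun weight :: "('i \<Rightarrow> 'q \<Rightarrow> 'q) \<Rightarrow> ('q \<Rightarrow> 'a) \<Rightarrow> 'q \<Rightarrow> 'i list \<Rightarrow> 'a \<Rightarrow> 'a" where
  "weight \<tau> out q [] a = out q * a"
| "weight \<tau> out q (k # w) a = weight \<tau> out (\<tau> k q) w a - weight \<tau> out q w (\<delta> k a)"

lemma additive_weights_weight: "additive_weights (weight \<tau> out q)"
proof -
  have "set w \<subseteq> I \<Longrightarrow> weight \<tau> out q w (a + b) = weight \<tau> out q w a + weight \<tau> out q w b"
    for w q a b
    by (induct w arbitrary: q a b) (simp_all add: distrib_left derivation_add)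
  then show ?thesis
    unfolding additive_weights_def by blast
qed

lemma weight_dead_state: "(\<And>k. \<tau> k q = q) \<Longrightarrow> out q = 0 \<Longrightarrow> weight \<tau> out q w a = 0"
  by (induct w arbitrary: a) simp_all

lemma coeff_sum_weight_var_mult:
  assumes "k \<in> I"
  shows "coeff_sum (weight \<tau> out q) (x k * s) = coeff_sum (weight \<tau> out (\<tau> k q)) s"
  unfolding coeff_sum_var_mult[OF assms additive_weights_weight] by (simp add: coeff_sum_def)

lemma right_combination_ne_one:
  assumes "i \<in> I" and "j \<in> I" and "i \<noteq> j"
  shows "x i * s + (x j * x i - 1) * t \<noteq> 1"
proof
  define \<tau> :: "'i \<Rightarrow> nat \<Rightarrow> nat"
    where "\<tau> k q = (if k = i \<and> q = 1 then 0 else if k = j \<and> q = 0 then 1 else 2)" for k q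
  define out :: "nat \<Rightarrow> 'a" where "out q = (if q = 0 then 1 else 0)" for q
  let ?\<phi> = "\<lambda>q. coeff_sum (weight \<tau> out q)"
  have "?\<phi> 0 (x i * s) = ?\<phi> (\<tau> i 0) s"
    by (rule coeff_sum_weight_var_mult[OF assms(1)])
  also have "weight \<tau> out (\<tau> i 0) = (\<lambda>_ _. 0)"
    using assms(3) by (simp add: fun_eq_iff weight_dead_state \<tau>_def out_def)
  finally have left_i: "?\<phi> 0 (x i * s) = 0"
    by (simp add: coeff_sum_def)
  have "?\<phi> 0 (x j * (x i * t)) = ?\<phi> (\<tau> i (\<tau> j 0)) t"
    using coeff_sum_weight_var_mult[OF assms(1), where \<tau> = \<tau>]
      coeff_sum_weight_var_mult[OF assms(2), where \<tau> = \<tau>] by simp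
  also have "\<tau> i (\<tau> j 0) = 0"
    by (simp add: \<tau>_def)
  finally have left_ji: "?\<phi> 0 (x j * (x i * t)) = ?\<phi> 0 t" .
  assume "x i * s + (x j * x i - 1) * t = 1"
  then have "x i * s + x j * (x i * t) - t = 1"
    by (simp add: algebra_simps)
  moreover have "?\<phi> 0 (x i * s + x j * (x i * t) - t) = 0"
    by (simp add: coeff_sum_add coeff_sum_diff additive_weights_weight left_i left_ji)
  ultimately have "?\<phi> 0 1 = 0"
    by simp
  moreover have "?\<phi> 0 1 = 1"
    by (simp add: coeff_sum_one additive_weights_weight out_def)
  ultimately show False by simp
qed

end

theorem theorem5p3:
  fixes I :: "'i set" and \<delta> :: "'i \<Rightarrow> 'a::ring_1 \<Rightarrow> 'a"
    and emb :: "'a \<Rightarrow> 'b::ring_1" and x :: "'i \<Rightarrow> 'b"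
  assumes "I \<noteq> {}" and "countable I"
    and "\<forall>i\<in>I. derivation (\<delta> i)"
    and "is_diff_poly_ring I \<delta> emb x"
    and "left_quasi_duo TYPE('b) \<or> right_quasi_duo TYPE('b)"
  shows "card I = 1"
proof (rule ccontr)
  interpret diff_poly_ring I \<delta> emb x
    using assms(3,4) by unfold_locales
  assume "card I \<noteq> 1"
  obtain i j where "i \<in> I" "j \<in> I" "i \<noteq> j"
    using assms(1) \<open>card I \<noteq> 1\<close> by (metis is_singletonI' is_singleton_altdef)
  from assms(5) show False
  proof
    assume "left_quasi_duo TYPE('b)"
    then obtain s t where "s * x i + t * (x i * x j - 1) = 1"
      using left_quasi_duo_unit_combination by blast
    with left_combination_ne_one[OF \<open>i \<in> I\<close> \<open>j \<in> I\<close> \<open>i \<noteq> j\<close>] show False by blast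
  next
    assume "right_quasi_duo TYPE('b)"
    then obtain s t where "x i * s + (x j * x i - 1) * t = 1"
      using right_quasi_duo_unit_combination by blast
    with right_combination_ne_one[OF \<open>i \<in> I\<close> \<open>j \<in> I\<close> \<open>i \<noteq> j\<close>] show False by blast
  qed
qed

end
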